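(* Let $n\ge1$, $a>0$, $d>0$, and $t\ge a+d$. Then for every $f\in\mathcal{E}_n^-$, $$|f(t)| \le \left(\frac{2e(t-a)}{d}\right)^n\|f\|_{[a,a+d]} \le \left(\frac{2et}{d}\right)^n\|f\|_{[a,a+d]}.$$
   Context: $\mathcal{E}_n^-$ denotes the set of all functions $f(t)=\sum_{j=1}^na_je^{\lambda_jt}$ ($t\in\mathbb{R}$) with $a_j,\lambda_j\in\mathbb{C}$ and $\mathrm{Re}(\lambda_j)\le0$ for all $j$. $\|f\|_{[a,a+d]}:=\sup_{s\in[a,a+d]}|f(s)|$. *)

theory Defs
  imports "HOL-Analysis.Analysis"
begin

definition exp_sums_neg :: "nat \<Rightarrow> (real \<Rightarrow> complex) set" where
  "exp_sums_neg n = {f. \<exists>c lam :: nat \<Rightarrow> complex.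
      (\<forall>j\<in>{1..n}. Re (lam j) \<le> 0) \<and>
      (\<forall>t. f t = (\<Sum>j=1..n. c j * exp (lam j * complex_of_real t)))}"

definition sup_norm_on :: "(real \<Rightarrow> complex) \<Rightarrow> real \<Rightarrow> real \<Rightarrow> real" where
  "sup_norm_on f a d = (SUP s\<in>{a..a+d}. cmod (f s))"

end

theory Submission
  imports Defs
begin

text \<open>Sample \<open>f\<close> on a grid \<open>a + k h\<close> whose first \<open>n\<close> points lie in \<open>[a, a + d]\<close>
  and whose \<open>m\<close>-th point is \<open>t\<close>, with \<open>m \<le> n (t - a) / d\<close>. The samples are power sums
  \<open>u k = (\<Sum>j. c j * w j ^ k)\<close> with \<open>\<bar>w j\<bar> \<le> 1\<close>, and \<open>u (k + 1) - w n * u k\<close> is a power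
  sum with one node fewer whose first \<open>n - 1\<close> values are at most twice as large. Induction on
  \<open>n\<close> bounds \<open>\<bar>u m\<bar>\<close> by \<open>(\<Sum>i<n. 2 ^ i * (m choose i))\<close> times the largest of the first \<open>n\<close>
  samples, and \<open>m choose i \<le> m ^ i / i!\<close> turns this factor into at most \<open>(2 e (t - a) / d) ^ n\<close>.\<close>

definition power_sum_growth :: "nat \<Rightarrow> nat \<Rightarrow> real" where
  "power_sum_growth n m = (\<Sum>i<n. 2 ^ i * real (m choose i))"

lemma sum_choose_lessThan: "(\<Sum>k<m. k choose i) = m choose Suc i"
  by (cases m) (simp_all add: lessThan_Suc_atMost sum_choose_upper)

lemma power_sum_growth_Suc:
  "power_sum_growth (Suc n) m = 1 + 2 * (\<Sum>k<m. power_sum_growth n k)"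
proof -
  have "(\<Sum>k<m. power_sum_growth n k) = (\<Sum>i<n. 2 ^ i * real (m choose Suc i))"
    unfolding power_sum_growth_def
    by (subst sum.swap) (simp add: sum_choose_lessThan flip: sum_distrib_left of_nat_sum)
  then show ?thesis
    unfolding power_sum_growth_def sum.lessThan_Suc_shift by (simp add: sum_distrib_left mult.assoc)
qed

lemma norm_linear_recurrence_le:
  fixes u v :: "nat \<Rightarrow> 'a::real_normed_div_algebra"
  assumes "\<And>k. u (Suc k) = v k + z * u k" and "norm z \<le> 1"
  shows "norm (u m) \<le> norm (u 0) + (\<Sum>k<m. norm (v k))"
proof (induction m)
  case (Suc m)
  have "norm (u (Suc m)) \<le> norm (v m) + norm (z * u m)"
    by (simp add: assms(1) norm_triangle_ineq)
  also have "\<dots> \<le> norm (v m) + norm (u m)"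
    using assms(2) by (simp add: norm_mult mult_left_le_one_le)
  finally show ?case using Suc.IH by simp
qed simp

lemma norm_power_sum_le:
  fixes c w :: "nat \<Rightarrow> 'a::real_normed_field"
  assumes "\<forall>j\<in>{1..n}. norm (w j) \<le> 1"
    and "\<forall>i<n. norm (\<Sum>j=1..n. c j * w j ^ i) \<le> M"
  shows "norm (\<Sum>j=1..n. c j * w j ^ m) \<le> power_sum_growth n m * M"
  using assms
proof (induction n arbitrary: c w M m)
  case 0
  then show ?case by (simp add: power_sum_growth_def)
next
  case (Suc n)
  define z where "z = w (Suc n)"
  define u where "u k = (\<Sum>j=1..Suc n. c j * w j ^ k)" for k
  define v where "v k = (\<Sum>j=1..n. (c j * (w j - z)) * w j ^ k)" for k
  have u_Suc: "u (Suc k) = v k + z * u k" for k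
    unfolding u_def v_def z_def
    by (simp add: sum.distrib sum_distrib_left sum_subtractf algebra_simps)
  have z: "norm z \<le> 1"
    using Suc.prems(1) by (simp add: z_def)
  have u: "norm (u i) \<le> M" if "i < Suc n" for i
    using Suc.prems(2) that by (simp add: u_def)
  have "norm (v i) \<le> 2 * M" if "i < n" for i
  proof -
    have "norm (v i) \<le> norm (u (Suc i)) + norm (z * u i)"
      using u_Suc[of i] by (metis add_diff_cancel_right' norm_triangle_ineq4)
    also have "\<dots> \<le> norm (u (Suc i)) + norm (u i)"
      using z by (simp add: norm_mult mult_left_le_one_le)
    finally show ?thesis
      using u[of i] u[of "Suc i"] that by simp
  qed
  then have v: "norm (v k) \<le> power_sum_growth n k * (2 * M)" for k
    using Suc.IH[of w "\<lambda>j. c j * (w j - z)"] Suc.prems(1) by (simp add: v_def)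
  have "norm (u m) \<le> norm (u 0) + (\<Sum>k<m. norm (v k))"
    by (rule norm_linear_recurrence_le[where u = u and v = v, OF u_Suc z])
  also have "\<dots> \<le> M + (\<Sum>k<m. power_sum_growth n k * (2 * M))"
    using u[of 0] v by (intro add_mono sum_mono) auto
  also have "\<dots> = power_sum_growth (Suc n) m * M"
    by (simp add: power_sum_growth_Suc sum_distrib_left sum_distrib_right algebra_simps)
  finally show ?case unfolding u_def .
qed

lemma binomial_le_pow_div_fact: "real (m choose i) \<le> real m ^ i / fact i"
proof -
  have "real (m choose i) * fact i \<le> real m ^ i"
    using binomial_fact_pow[of m i] by (metis of_nat_fact of_nat_le_iff of_nat_mult of_nat_power)
  then show ?thesis by (simp add: field_simps)
qed

lemma sum_pow_div_fact_le_exp: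
  fixes x :: real
  assumes "0 \<le> x"
  shows "(\<Sum>i<n. x ^ i / fact i) \<le> exp x"
proof -
  have "(\<Sum>i<n. inverse (fact i) * x ^ i) \<le> (\<Sum>i. inverse (fact i) * x ^ i)"
    using assms by (intro sum_le_suminf summable_exp) auto
  then show ?thesis by (simp add: exp_def field_simps)
qed

lemma power_sum_growth_le:
  fixes x :: real
  assumes "n \<ge> 1" and "x \<ge> 1" and "real m \<le> real n * x"
  shows "power_sum_growth n m \<le> (2 * exp 1 * x) ^ n"
proof -
  have "2 ^ i * real (m choose i) \<le> 2 ^ (n - 1) * (x ^ (n - 1) * (real n ^ i / fact i))"
    if "i < n" for i
  proof (rule mult_mono)
    have "real (m choose i) \<le> (real n * x) ^ i / fact i"
      using binomial_le_pow_div_fact[of m i] assms(3)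
      by (meson divide_right_mono fact_ge_zero of_nat_0_le_iff order_trans power_mono)
    also have "\<dots> = x ^ i * (real n ^ i / fact i)"
      by (simp add: power_mult_distrib)
    also have "\<dots> \<le> x ^ (n - 1) * (real n ^ i / fact i)"
      using that assms(2) by (intro mult_right_mono power_increasing) auto
    finally show "real (m choose i) \<le> x ^ (n - 1) * (real n ^ i / fact i)" .
  qed (use that in \<open>auto intro: power_increasing\<close>)
  then have "power_sum_growth n m \<le> (\<Sum>i<n. 2 ^ (n - 1) * (x ^ (n - 1) * (real n ^ i / fact i)))"
    unfolding power_sum_growth_def by (intro sum_mono) auto
  also have "\<dots> = 2 ^ (n - 1) * x ^ (n - 1) * (\<Sum>i<n. real n ^ i / fact i)"
    by (simp add: sum_distrib_left mult.assoc)
  also have "\<dots> \<le> 2 ^ (n - 1) * x ^ (n - 1) * exp 1 ^ n"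
    using assms(2) sum_pow_div_fact_le_exp[of "real n" n]
    by (simp add: exp_of_nat_mult[symmetric] mult_left_mono)
  also have "\<dots> \<le> 2 ^ n * x ^ n * exp 1 ^ n"
    using assms by (intro mult_right_mono mult_mono power_increasing) auto
  finally show ?thesis by (simp add: power_mult_distrib mult_ac)
qed

lemma exp_sums_neg_continuous_on:
  assumes "f \<in> exp_sums_neg n"
  shows "continuous_on S f"
proof -
  obtain c lam :: "nat \<Rightarrow> complex"
    where "f = (\<lambda>t. \<Sum>j=1..n. c j * exp (lam j * complex_of_real t))"
    using assms unfolding exp_sums_neg_def by blast
  then show ?thesis by (simp add: continuous_intros)
qed

lemma norm_le_sup_norm_on:
  assumes "continuous_on {a..a+d} f" and "s \<in> {a..a+d}"
  shows "cmod (f s) \<le> sup_norm_on f a d"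
proof -
  have "compact ((\<lambda>s. cmod (f s)) ` {a..a+d})"
    using assms(1) by (intro compact_continuous_image continuous_on_norm) auto
  then have "bdd_above ((\<lambda>s. cmod (f s)) ` {a..a+d})"
    by (intro bounded_imp_bdd_above compact_imp_bounded)
  then show ?thesis
    unfolding sup_norm_on_def using assms(2) by (rule cSUP_upper2) simp
qed

lemma exp_sums_neg_grid_bound:
  assumes "f \<in> exp_sums_neg n" and "h \<ge> 0"
    and "\<forall>i<n. cmod (f (a + real i * h)) \<le> M"
  shows "cmod (f (a + real m * h)) \<le> power_sum_growth n m * M"
proof -
  obtain c lam :: "nat \<Rightarrow> complex" where lam: "\<forall>j\<in>{1..n}. Re (lam j) \<le> 0"
    and f: "\<And>t. f t = (\<Sum>j=1..n. c j * exp (lam j * complex_of_real t))"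
    using assms(1) unfolding exp_sums_neg_def by blast
  define c' where "c' j = c j * exp (lam j * complex_of_real a)" for j
  define w where "w j = exp (lam j * complex_of_real h)" for j
  have f_grid: "f (a + real k * h) = (\<Sum>j=1..n. c' j * w j ^ k)" for k
    unfolding f c'_def w_def
    by (simp add: exp_of_nat_mult[symmetric] distrib_left exp_add mult_ac)
  have "\<forall>j\<in>{1..n}. cmod (w j) \<le> 1"
    using lam assms(2) by (simp add: w_def norm_exp_eq_Re mult_nonpos_nonneg)
  from norm_power_sum_le[OF this] show ?thesis
    using assms(3) by (simp add: f_grid)
qed

lemma obtain_nat_between:
  fixes x :: real
  assumes "n \<ge> 1" and "x \<ge> 1"
  obtains m :: nat where "m \<ge> 1" and "real (n - 1) * x \<le> real m" and "real m \<le> real n * x"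
proof
  have nx: "1 \<le> real n * x"
    using assms mult_mono[of 1 "real n" 1 x] by simp
  have fl: "real n * x - 1 < of_int \<lfloor>real n * x\<rfloor>" "of_int \<lfloor>real n * x\<rfloor> \<le> real n * x"
    by linarith+
  then have nn: "real (nat \<lfloor>real n * x\<rfloor>) = of_int \<lfloor>real n * x\<rfloor>"
    using nx by simp
  show "nat \<lfloor>real n * x\<rfloor> \<ge> 1"
    using fl nn nx by linarith
  show "real (nat \<lfloor>real n * x\<rfloor>) \<le> real n * x"
    using fl nn by simp
  have "real (n - 1) * x = real n * x - x"
    using assms(1) by (simp add: of_nat_diff algebra_simps)
  then show "real (n - 1) * x \<le> real (nat \<lfloor>real n * x\<rfloor>)"
    using fl nn assms(2) by linarith
qed

theorem lemma12p2:
  fixes n :: nat and a d t :: real and f :: "real \<Rightarrow> complex"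
  assumes "n \<ge> 1" and "a > 0" and "d > 0" and "t \<ge> a + d"
    and "f \<in> exp_sums_neg n"
  shows "cmod (f t) \<le> (2 * exp 1 * (t - a) / d) ^ n * sup_norm_on f a d
         \<and> (2 * exp 1 * (t - a) / d) ^ n * sup_norm_on f a d
             \<le> (2 * exp 1 * t / d) ^ n * sup_norm_on f a d"
proof -
  define N where "N = sup_norm_on f a d"
  have sup: "cmod (f s) \<le> N" if "s \<in> {a..a+d}" for s
    unfolding N_def by (rule norm_le_sup_norm_on[OF exp_sums_neg_continuous_on[OF assms(5)] that])
  have N: "N \<ge> 0"
    using sup[of a] assms(3) by (simp add: order_trans[OF norm_ge_zero])
  define x where "x = (t - a) / d"
  have x: "x \<ge> 1"
    using assms(3,4) by (simp add: x_def)
  obtain m where m: "m \<ge> 1" "real (n - 1) * x \<le> real m" "real m \<le> real n * x"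
    using obtain_nat_between[OF assms(1) x] .
  define h where "h = (t - a) / real m"
  have h: "h \<ge> 0" and t: "a + real m * h = t"
    using assms(4,3) m(1) by (simp_all add: h_def)
  have "\<forall>i<n. cmod (f (a + real i * h)) \<le> N"
  proof (intro allI impI sup)
    fix i assume "i < n"
    then have "real i * h \<le> real (n - 1) * h"
      using h by (intro mult_right_mono) auto
    also have "\<dots> = real (n - 1) * x * d / real m"
      using assms(3) by (simp add: h_def x_def)
    also have "\<dots> \<le> d"
      using m(1,2) assms(3) by (simp add: divide_le_eq mult.commute mult_left_mono)
    finally show "a + real i * h \<in> {a..a+d}"
      using h by simp
  qed
  then have "cmod (f t) \<le> power_sum_growth n m * N"
    using exp_sums_neg_grid_bound[OF assms(5) h] t by metis
  also have "\<dots> \<le> (2 * exp 1 * (t - a) / d) ^ n * N"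
    using power_sum_growth_le[OF assms(1) x m(3)] N by (simp add: x_def mult_right_mono)
  finally have "cmod (f t) \<le> (2 * exp 1 * (t - a) / d) ^ n * N" .
  moreover have "(2 * exp 1 * (t - a) / d) ^ n * N \<le> (2 * exp 1 * t / d) ^ n * N"
    using assms(2-4) N by (intro mult_right_mono power_mono divide_right_mono) auto
  ultimately show ?thesis
    unfolding N_def ..
qed

end
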